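(* Let $m<M$ be real numbers and let $X$ be a random variable taking values in $[m,M]$, either discrete (taking finitely many values $x_1,\dots,x_n\in[m,M]$ with probabilities $p_1,\dots,p_n$) or continuous (with probability density $f$ on $[m,M]$). Let $\mu_1'$ be its mean and $\mu_2,\mu_3,\mu_4$ its second, third and fourth central moments, and assume $\mu_2\neq(\mu_1'-m)(M-\mu_1')$ and $\mu_2>0$. Then $$\mu_4-\mu_2^2-\frac{\mu_3^2}{\mu_2}\le (\mu_1'-m)(M-\mu_1')\Big(\frac{M-m}{4}\Big)^2\le\frac{(M-m)^4}{64}.$$
   Context: The mean is $\mu_1'=\sum_{i=1}^n p_i x_i$ (discrete case) or $\mu_1'=\int_m^M x f(x)\,dx$ (continuous case), where $\sum p_i=1$, resp. $\int_m^M f(x)\,dx=1$. The $r$-th central moment is $\mu_r=\sum_{i=1}^n p_i (x_i-\mu_1')^r$, resp. $\mu_r=\int_m^M (x-\mu_1')^r f(x)\,dx$. *)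

theory Defs
  imports "HOL-Analysis.Analysis"
begin

text \<open>Discrete case: values x 0, ..., x (n-1) with probabilities p 0, ..., p (n-1).\<close>

definition disc_mean :: "nat \<Rightarrow> (nat \<Rightarrow> real) \<Rightarrow> (nat \<Rightarrow> real) \<Rightarrow> real" where
  "disc_mean n p x = (\<Sum>i<n. p i * x i)"

definition disc_cmoment :: "nat \<Rightarrow> (nat \<Rightarrow> real) \<Rightarrow> (nat \<Rightarrow> real) \<Rightarrow> nat \<Rightarrow> real" where
  "disc_cmoment n p x r = (\<Sum>i<n. p i * (x i - disc_mean n p x) ^ r)"

definition cont_mean :: "real \<Rightarrow> real \<Rightarrow> (real \<Rightarrow> real) \<Rightarrow> real" where
  "cont_mean m M f = integral {m..M} (\<lambda>t. t * f t)"

definition cont_cmoment :: "real \<Rightarrow> real \<Rightarrow> (real \<Rightarrow> real) \<Rightarrow> nat \<Rightarrow> real" where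
  "cont_cmoment m M f r = integral {m..M} (\<lambda>t. (t - cont_mean m M f) ^ r * f t)"

end

theory Submission imports Defs begin

text \<open>Write \<open>Y = X - \<mu>\<^sub>1'\<close>, \<open>h = (M - m)/2\<close> and \<open>d = \<mu>\<^sub>1' - (M + m)/2\<close>. On \<open>[m, M]\<close> the square of the
  quadratic \<open>Y\<^sup>2 + (3d/2) Y + (d\<^sup>2 - h\<^sup>2)/2\<close> is dominated by the affine function
  \<open>h\<^sup>2(h\<^sup>2 - d\<^sup>2)/4 - (h\<^sup>2 d/2) Y\<close>, the difference being \<open>(X - m)(M - X)(X - (M + m)/2 - d/2)\<^sup>2 \<ge> 0\<close>. Taking
  expectations, with \<open>E Y = 0\<close>, bounds \<open>E (Y\<^sup>2 + a Y + b)\<^sup>2\<close> by \<open>h\<^sup>2(h\<^sup>2 - d\<^sup>2)/4\<close>, which is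
  \<open>(\<mu>\<^sub>1' - m)(M - \<mu>\<^sub>1')((M - m)/4)\<^sup>2\<close>. Expanding in central moments and completing squares in \<open>a\<close>
  and \<open>b\<close> leaves \<open>\<mu>\<^sub>4 - \<mu>\<^sub>2\<^sup>2 - \<mu>\<^sub>3\<^sup>2/\<mu>\<^sub>2\<close> on the left.\<close>

lemma quartic_majorant:
  fixes m M u t :: real
  defines "d \<equiv> u - (M + m) / 2" and "h \<equiv> (M - m) / 2"
  assumes "t \<in> {m..M}"
  shows "((t - u)^2 + 3*d/2 * (t - u) + (d^2 - h^2)/2)^2 \<le> h^2*(h^2 - d^2)/4 - h^2*d/2 * (t - u)"
proof -
  have "h^2*(h^2 - d^2)/4 - h^2*d/2 * (t - u) - ((t - u)^2 + 3*d/2 * (t - u) + (d^2 - h^2)/2)^2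
      = (t - m) * (M - t) * (t - (M + m)/2 - d/2)^2"
    unfolding d_def h_def by (simp add: power2_eq_square power4_eq_xxxx algebra_simps divide_simps)
  moreover have "0 \<le> (t - m) * (M - t) * (t - (M + m)/2 - d/2)^2"
    using assms(3) by simp
  ultimately show ?thesis by linarith
qed

lemma variance_deficit_le_quartic_expectation:
  fixes c2 c3 c4 a b :: real
  assumes "c2 > 0"
  shows "c4 - c2^2 - c3^2 / c2 \<le> c4 + 2*a*c3 + (a^2 + 2*b)*c2 + b^2"
proof -
  have "c4 + 2*a*c3 + (a^2 + 2*b)*c2 + b^2 = (c4 - c2^2 - c3^2 / c2) + c2*(a + c3/c2)^2 + (b + c2)^2"
    using assms by (simp add: field_simps power2_eq_square)
  moreover have "0 \<le> c2*(a + c3/c2)^2 + (b + c2)^2"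
    using assms by simp
  ultimately show ?thesis by linarith
qed

text \<open>The central moments \<open>c k = E (X - u)\<^sup>k\<close> of any distribution on \<open>[m, M]\<close> satisfy the
  monotonicity hypothesis below: it is the expectation of a pointwise quartic inequality.\<close>

lemma central_moment_bound:
  fixes m M u :: real and c :: "nat \<Rightarrow> real"
  assumes c0: "c 0 = 1" and c1: "c 1 = 0" and c2: "c 2 > 0"
    and mono: "\<And>a b A B. (\<And>t. t \<in> {m..M} \<Longrightarrow> ((t - u)^2 + a*(t - u) + b)^2 \<le> A + B*(t - u))
      \<Longrightarrow> c 4 + 2*a*c 3 + (a^2 + 2*b)*c 2 + 2*a*b*c 1 + b^2*c 0 \<le> A*c 0 + B*c 1"
  shows "c 4 - (c 2)^2 - (c 3)^2 / c 2 \<le> (u - m) * (M - u) * ((M - m) / 4)^2"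
proof -
  define d h where "d = u - (M + m)/2" and "h = (M - m)/(2::real)"
  have "c 4 + 2*(3*d/2)*c 3 + ((3*d/2)^2 + 2*((d^2 - h^2)/2))*c 2 + ((d^2 - h^2)/2)^2
      \<le> h^2*(h^2 - d^2)/4"
    using mono[of "3*d/2" "(d^2 - h^2)/2" "h^2*(h^2 - d^2)/4" "- (h^2*d/2)"]
      quartic_majorant[of _ m M u] c0 c1
    unfolding d_def h_def by fastforce
  moreover have "h^2*(h^2 - d^2)/4 = (u - m) * (M - u) * ((M - m) / 4)^2"
    unfolding d_def h_def by (simp add: field_simps power2_eq_square)
  ultimately show ?thesis
    using variance_deficit_le_quartic_expectation[OF c2, of "c 4" "c 3" "3*d/2" "(d^2 - h^2)/2"] by linarith
qed

lemma range_product_le: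
  fixes m M u :: real
  shows "(u - m) * (M - u) \<le> (M - m)^2 / 4"
  using zero_le_square[of "u - (M + m)/2"] by (simp add: power2_eq_square algebra_simps divide_simps)

lemma range_product_bound_le:
  fixes m M u :: real
  shows "(u - m) * (M - u) * ((M - m) / 4)^2 \<le> (M - m)^4 / 64"
proof -
  have "(u - m) * (M - u) * ((M - m) / 4)^2 \<le> (M - m)^2/4 * ((M - m) / 4)^2"
    using range_product_le by (intro mult_right_mono) auto
  also have "\<dots> = (M - m)^4 / 64"
    by (simp add: field_simps power2_eq_square power4_eq_xxxx)
  finally show ?thesis .
qed

lemma disc_moment_bound:
  fixes m M :: real
  assumes hp: "\<forall>i<n. 0 \<le> p i \<and> x i \<in> {m..M}" and s1: "(\<Sum>i<n. p i) = 1"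
    and pos: "disc_cmoment n p x 2 > 0"
  shows "disc_cmoment n p x 4 - (disc_cmoment n p x 2)^2
         - (disc_cmoment n p x 3)^2 / disc_cmoment n p x 2
         \<le> (disc_mean n p x - m) * (M - disc_mean n p x) * ((M - m) / 4)^2"
proof (rule central_moment_bound[where c = "disc_cmoment n p x"])
  define u where "u = disc_mean n p x"
  show "disc_cmoment n p x 0 = 1"
    using s1 by (simp add: disc_cmoment_def)
  have "disc_cmoment n p x 1 = (\<Sum>i<n. p i * x i) - u * (\<Sum>i<n. p i)"
    by (simp add: disc_cmoment_def u_def algebra_simps sum_subtractf sum_distrib_left)
  then show "disc_cmoment n p x 1 = 0"
    using s1 by (simp add: u_def disc_mean_def)
  show "disc_cmoment n p x 2 > 0" by (fact pos)
  fix a b A B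
  assume pt: "\<And>t. t \<in> {m..M} \<Longrightarrow> ((t - u)^2 + a*(t - u) + b)^2 \<le> A + B*(t - u)"
  let ?c = "disc_cmoment n p x"
  have "?c 4 + 2*a*?c 3 + (a^2 + 2*b)*?c 2 + 2*a*b*?c 1 + b^2*?c 0
      = (\<Sum>i<n. p i * ((x i - u)^2 + a*(x i - u) + b)^2)"
    unfolding disc_cmoment_def u_def[symmetric] sum_distrib_left sum.distrib[symmetric]
    by (rule sum.cong[OF refl]) algebra
  also have "\<dots> \<le> (\<Sum>i<n. p i * (A + B*(x i - u)))"
    using hp pt by (intro sum_mono mult_left_mono) auto
  also have "\<dots> = A*?c 0 + B*?c 1"
    unfolding disc_cmoment_def u_def[symmetric] sum_distrib_left sum.distrib[symmetric]
    by (rule sum.cong[OF refl]) algebra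
  finally show "?c 4 + 2*a*?c 3 + (a^2 + 2*b)*?c 2 + 2*a*b*?c 1 + b^2*?c 0 \<le> A*?c 0 + B*?c 1" .
qed

lemma continuous_times_density_integrable:
  fixes f g :: "real \<Rightarrow> real"
  assumes g: "continuous_on {m..M} g" and nn: "\<forall>t\<in>{m..M}. 0 \<le> f t" and fi: "f integrable_on {m..M}"
  shows "(\<lambda>t. g t * f t) integrable_on {m..M}"
proof -
  have "(\<lambda>t. g t * f t) absolutely_integrable_on {m..M}"
  proof (rule absolutely_integrable_bounded_measurable_product_real)
    show "g \<in> borel_measurable (lebesgue_on {m..M})"
      by (rule continuous_imp_measurable_on_sets_lebesgue[OF g]) simp
    show "bounded (g ` {m..M})"
      by (rule compact_imp_bounded[OF compact_continuous_image[OF g]]) simp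
    show "f absolutely_integrable_on {m..M}"
      using nonnegative_absolutely_integrable_1[OF fi] nn by blast
  qed simp
  then show ?thesis using absolutely_integrable_on_def by blast
qed

lemma cont_moment_bound:
  fixes m M :: real and f :: "real \<Rightarrow> real"
  assumes nn: "\<forall>t\<in>{m..M}. 0 \<le> f t" and fi: "f integrable_on {m..M}" and s1: "integral {m..M} f = 1"
    and pos: "cont_cmoment m M f 2 > 0"
  shows "cont_cmoment m M f 4 - (cont_cmoment m M f 2)^2
         - (cont_cmoment m M f 3)^2 / cont_cmoment m M f 2
         \<le> (cont_mean m M f - m) * (M - cont_mean m M f) * ((M - m) / 4)^2"
proof (rule central_moment_bound[where c = "cont_cmoment m M f"])
  define u where "u = cont_mean m M f"
  let ?c = "cont_cmoment m M f"
  have hk: "((\<lambda>t. (t - u)^k * f t) has_integral ?c k) {m..M}" for k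
    unfolding cont_cmoment_def u_def[symmetric]
    by (intro integrable_integral continuous_times_density_integrable[OF _ nn fi] continuous_intros)
  have ff: "(f has_integral 1) {m..M}"
    using fi s1 integrable_integral by fastforce
  have tf: "((\<lambda>t. t * f t) has_integral u) {m..M}"
    unfolding u_def cont_mean_def
    by (intro integrable_integral continuous_times_density_integrable[OF _ nn fi] continuous_intros)
  show c0: "?c 0 = 1"
    using s1 by (simp add: cont_cmoment_def)
  have "((\<lambda>t. t * f t - u * f t) has_integral (u - u * 1)) {m..M}"
    by (intro has_integral_diff has_integral_mult_right tf ff)
  moreover have "((\<lambda>t. t * f t - u * f t) has_integral ?c 1) {m..M}"
    using hk[of 1] by (rule has_integral_eq[rotated]) (simp add: algebra_simps)
  ultimately show c1: "?c 1 = 0"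
    by (simp add: has_integral_unique)
  show "?c 2 > 0" by (fact pos)
  fix a b A B
  assume pt: "\<And>t. t \<in> {m..M} \<Longrightarrow> ((t - u)^2 + a*(t - u) + b)^2 \<le> A + B*(t - u)"
  have "((\<lambda>t. (t - u)^4 * f t + 2*a*((t - u)^3 * f t) + (a^2 + 2*b)*((t - u)^2 * f t)
       + 2*a*b*((t - u)^1 * f t) + b^2*((t - u)^0 * f t))
      has_integral (?c 4 + 2*a*?c 3 + (a^2 + 2*b)*?c 2 + 2*a*b*?c 1 + b^2*?c 0)) {m..M}"
    by (rule has_integral_add has_integral_mult_right hk)+
  then have lhs: "((\<lambda>t. ((t - u)^2 + a*(t - u) + b)^2 * f t)
      has_integral (?c 4 + 2*a*?c 3 + (a^2 + 2*b)*?c 2 + 2*a*b*?c 1 + b^2*?c 0)) {m..M}"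
    by (rule has_integral_eq[rotated]) (simp add: power2_eq_square power3_eq_cube power4_eq_xxxx algebra_simps)
  have "((\<lambda>t. A*((t - u)^0 * f t) + B*((t - u)^1 * f t)) has_integral (A*?c 0 + B*?c 1)) {m..M}"
    by (rule has_integral_add has_integral_mult_right hk)+
  then have rhs: "((\<lambda>t. (A + B*(t - u)) * f t) has_integral (A*?c 0 + B*?c 1)) {m..M}"
    by (rule has_integral_eq[rotated]) (simp add: algebra_simps)
  show "?c 4 + 2*a*?c 3 + (a^2 + 2*b)*?c 2 + 2*a*b*?c 1 + b^2*?c 0 \<le> A*?c 0 + B*?c 1"
    using lhs rhs by (rule has_integral_le) (use nn pt in \<open>auto intro: mult_right_mono\<close>)
qed

theorem corollary2p4:
  fixes m M :: real
  assumes "m < M"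
  shows
   "(\<forall>(n::nat) (p::nat \<Rightarrow> real) (x::nat \<Rightarrow> real).
       (\<forall>i<n. 0 \<le> p i \<and> x i \<in> {m..M}) \<and> (\<Sum>i<n. p i) = 1 \<and>
       disc_cmoment n p x 2 \<noteq> (disc_mean n p x - m) * (M - disc_mean n p x) \<and>
       disc_cmoment n p x 2 > 0 \<longrightarrow>
       disc_cmoment n p x 4 - (disc_cmoment n p x 2)\<^sup>2
         - (disc_cmoment n p x 3)\<^sup>2 / disc_cmoment n p x 2
         \<le> (disc_mean n p x - m) * (M - disc_mean n p x) * ((M - m) / 4)\<^sup>2 \<and>
       (disc_mean n p x - m) * (M - disc_mean n p x) * ((M - m) / 4)\<^sup>2
         \<le> (M - m) ^ 4 / 64)
  \<and>
   (\<forall>f :: real \<Rightarrow> real.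
       (\<forall>t\<in>{m..M}. 0 \<le> f t) \<and> f integrable_on {m..M} \<and> integral {m..M} f = 1 \<and>
       cont_cmoment m M f 2 \<noteq> (cont_mean m M f - m) * (M - cont_mean m M f) \<and>
       cont_cmoment m M f 2 > 0 \<longrightarrow>
       cont_cmoment m M f 4 - (cont_cmoment m M f 2)\<^sup>2
         - (cont_cmoment m M f 3)\<^sup>2 / cont_cmoment m M f 2
         \<le> (cont_mean m M f - m) * (M - cont_mean m M f) * ((M - m) / 4)\<^sup>2 \<and>
       (cont_mean m M f - m) * (M - cont_mean m M f) * ((M - m) / 4)\<^sup>2
         \<le> (M - m) ^ 4 / 64)"
  using disc_moment_bound[where m = m and M = M] cont_moment_bound[where m = m and M = M]
    range_product_bound_le[where m = m and M = M]
  by blast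

end
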